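(* Let $v\equiv 3$ or $15\pmod{18}$ and let $S=(\mathbb{Z}_v,\mathcal{B})$ be a cyclic $\mathrm{STS}(v)$ (with cyclic automorphism $i\mapsto i+1\bmod v$) having no full orbit of Type $3$. Then $S$ has no full orbit of Type $1$ (i.e. all full orbits are of Type $2$).
   Context: A Steiner triple system $\mathrm{STS}(v)$ is a pair $(X,\mathcal{B})$ with $|X|=v$ and $\mathcal{B}$ a collection of 3-subsets of $X$ such that every 2-subset lies in exactly one block. It is cyclic if (after relabeling) $X=\mathbb{Z}_v$ and the map $\alpha: i\mapsto i+1 \pmod v$ maps blocks to blocks. The blocks are partitioned into orbits under the group generated by $\alpha$; an orbit with $v$ blocks is a full orbit. For $v\equiv 3\pmod 6$ there is exactly one short orbit, the orbit of $\{0,v/3,2v/3\}$, of size $v/3$. When $3\mid v$, an orbit is of Type $i$ ($i=1,2,3$) if every block in it contains elements of exactly $i$ distinct residue classes modulo $3$. *)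

theory Defs
  imports Main
begin

text \<open>Steiner triple system on the point set {0..<v} (a model of Z_v).\<close>
definition is_STS :: "nat \<Rightarrow> nat set set \<Rightarrow> bool" where
  "is_STS v \<B> \<longleftrightarrow>
     (\<forall>B\<in>\<B>. B \<subseteq> {0..<v} \<and> card B = 3) \<and>
     (\<forall>x\<in>{0..<v}. \<forall>y\<in>{0..<v}. x \<noteq> y \<longrightarrow> (\<exists>!B. B \<in> \<B> \<and> {x, y} \<subseteq> B))"

definition shift_block :: "nat \<Rightarrow> nat set \<Rightarrow> nat set" where
  "shift_block v B = (\<lambda>i. (i + 1) mod v) ` B"

definition is_cyclic_STS :: "nat \<Rightarrow> nat set set \<Rightarrow> bool" where
  "is_cyclic_STS v \<B> \<longleftrightarrow> is_STS v \<B> \<and> (\<forall>B\<in>\<B>. shift_block v B \<in> \<B>)"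

definition block_orbit :: "nat \<Rightarrow> nat set \<Rightarrow> nat set set" where
  "block_orbit v B = {(shift_block v ^^ k) B | k. True}"

definition full_orbit :: "nat \<Rightarrow> nat set \<Rightarrow> bool" where
  "full_orbit v B \<longleftrightarrow> card (block_orbit v B) = v"

definition num_classes :: "nat set \<Rightarrow> nat" where
  "num_classes B = card ((\<lambda>x. x mod 3) ` B)"

definition orbit_of_type :: "nat \<Rightarrow> nat \<Rightarrow> nat set \<Rightarrow> bool" where
  "orbit_of_type v i B \<longleftrightarrow> (\<forall>C\<in>block_orbit v B. num_classes C = i)"

end

theory Submission
  imports Defs
begin

(* Write v = 3n and let t_i be the number of blocks meeting exactly i residue classes mod 3.
   Counting ordered pairs of distinct points in the same class, there are 3n(n - 1) of them, and a
   block meeting 1, 2 or 3 classes contains 6, 2 or 0 of them; together with 6 |B| = v(v - 1)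
   this gives t_3 = n + 2 t_1.  If no full orbit is of Type 3, every block meeting three classes
   is fixed by a nontrivial rotation, and for odd v this forces it to be one of the n cosets
   {r, r + n, r + 2n}.  Hence t_3 <= n and t_1 = 0. *)

definition related_pairs :: "('a \<Rightarrow> 'a \<Rightarrow> bool) \<Rightarrow> 'a set \<Rightarrow> ('a \<times> 'a) set" where
  "related_pairs R A = Sigma A (\<lambda>x. {y\<in>A. R x y} - {x})"

abbreviation same_class :: "nat \<Rightarrow> nat \<Rightarrow> bool" where
  "same_class x y \<equiv> x mod 3 = y mod 3"

lemma finite_STS_blocks:
  assumes "is_STS v \<B>" shows "finite \<B>"
proof (rule finite_subset)
  show "\<B> \<subseteq> Pow {0..<v}" using assms unfolding is_STS_def by blast
qed simp

lemma card_related_pairs_STS: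
  assumes "is_STS v \<B>"
  shows "card (related_pairs R {0..<v}) = (\<Sum>B\<in>\<B>. card (related_pairs R B))"
proof -
  have blocks: "\<And>B. B \<in> \<B> \<Longrightarrow> B \<subseteq> {0..<v} \<and> card B = 3"
    and unique: "\<And>x y. x < v \<Longrightarrow> y < v \<Longrightarrow> x \<noteq> y \<Longrightarrow> \<exists>!B. B \<in> \<B> \<and> {x, y} \<subseteq> B"
    using assms unfolding is_STS_def by auto
  have "related_pairs R {0..<v} = (\<Union>B\<in>\<B>. related_pairs R B)"
  proof (intro equalityI subsetI)
    fix p assume "p \<in> related_pairs R {0..<v}"
    then obtain x y where "p = (x, y)" "x < v" "y < v" "x \<noteq> y" "R x y"
      by (cases p) (auto simp: related_pairs_def)
    with unique[of x y] show "p \<in> (\<Union>B\<in>\<B>. related_pairs R B)"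
      unfolding related_pairs_def by auto
  qed (use blocks in \<open>fastforce simp: related_pairs_def\<close>)
  moreover have "card (\<Union>B\<in>\<B>. related_pairs R B) = (\<Sum>B\<in>\<B>. card (related_pairs R B))"
  proof (rule card_UN_disjoint; (intro ballI impI)?)
    show "finite \<B>" using assms by (rule finite_STS_blocks)
    show "finite (related_pairs R B)" if "B \<in> \<B>" for B
      using blocks[OF that] finite_subset[of B "{0..<v}"]
      unfolding related_pairs_def by auto
    show "related_pairs R A \<inter> related_pairs R B = {}" if "A \<in> \<B>" "B \<in> \<B>" "A \<noteq> B" for A B
    proof (rule ccontr)
      assume "related_pairs R A \<inter> related_pairs R B \<noteq> {}"
      then obtain x y where "{x, y} \<subseteq> A" "{x, y} \<subseteq> B" "x \<noteq> y"
        unfolding related_pairs_def by auto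
      moreover have "x < v" "y < v" using blocks[OF \<open>A \<in> \<B>\<close>] \<open>{x, y} \<subseteq> A\<close> by auto
      ultimately show False using unique[of x y] that by auto
    qed
  qed
  ultimately show ?thesis by simp
qed

lemma card_related_pairs_const:
  assumes "finite A" "\<And>x. x \<in> A \<Longrightarrow> card ({y\<in>A. R x y} - {x}) = c"
  shows "card (related_pairs R A) = card A * c"
  unfolding related_pairs_def using assms by (simp add: card_SigmaI)

lemma card_residue_class:
  assumes "r < 3" shows "card {y\<in>{0..<3 * n}. y mod 3 = r} = n"
proof -
  have "{y\<in>{0..<3 * n}. y mod 3 = r} = (\<lambda>k. 3 * k + r) ` {..<n}"
  proof (intro equalityI subsetI)
    fix y assume "y \<in> {y\<in>{0..<3 * n}. y mod 3 = r}"
    then have "y = 3 * (y div 3) + r" "y div 3 < n" by auto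
    then show "y \<in> (\<lambda>k. 3 * k + r) ` {..<n}" by blast
  qed (use assms in auto)
  moreover have "inj_on (\<lambda>k. 3 * k + r) {..<n}" by (auto simp: inj_on_def)
  ultimately show ?thesis by (simp add: card_image)
qed

lemma card_same_class_pairs:
  "card (related_pairs same_class {0..<3 * n}) = 3 * n * (n - 1)"
proof -
  have "card ({y\<in>{0..<3 * n}. same_class x y} - {x}) = n - 1" if "x < 3 * n" for x
  proof -
    have "{y\<in>{0..<3 * n}. same_class x y} = {y\<in>{0..<3 * n}. y mod 3 = x mod 3}" by auto
    with card_residue_class[of "x mod 3" n] that show ?thesis by simp
  qed
  then have "card (related_pairs same_class {0..<3 * n}) = card {0..<3 * n} * (n - 1)"
    by (intro card_related_pairs_const) auto
  then show ?thesis by simp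
qed

lemma card_image_triple:
  assumes "card B = 3" shows "card (f ` B) \<in> {1, 2, 3}"
proof -
  have "finite B" "B \<noteq> {}" using assms by (auto intro: card_ge_0_finite)
  then have "0 < card (f ` B)" "card (f ` B) \<le> 3"
    using assms card_image_le[of B f] by auto
  then show ?thesis by auto
qed

lemma card_kernel_pairs_triple:
  fixes f :: "'a \<Rightarrow> 'b"
  assumes "card B = 3"
  shows "card (related_pairs (\<lambda>x y. f x = f y) B) =
    6 * of_bool (card (f ` B) = 1) + 2 * of_bool (card (f ` B) = 2)"
proof -
  obtain a b c where B: "B = {a, b, c}" and distinct: "a \<noteq> b" "b \<noteq> c" "a \<noteq> c"
    using assms card_3_iff by metis
  define ps where "ps = filter (\<lambda>(x, y). f x = f y) [(a,b), (b,a), (a,c), (c,a), (b,c), (c,b)]"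
  have "related_pairs (\<lambda>x y. f x = f y) B = set ps"
    unfolding related_pairs_def B ps_def using distinct by auto
  moreover have "distinct ps" unfolding ps_def using distinct by auto
  ultimately have "card (related_pairs (\<lambda>x y. f x = f y) B) = length ps" by (simp add: distinct_card)
  then show ?thesis
    unfolding B ps_def
    by (cases "f a = f b"; cases "f a = f c"; cases "f b = f c") (simp_all add: card_insert_if)
qed

lemma card_STS_blocks:
  assumes "is_STS v \<B>" shows "6 * card \<B> = v * (v - 1)"
proof -
  let ?all = "\<lambda>_ _. True"
  have "v * (v - 1) = card (related_pairs ?all {0..<v})"
    by (subst card_related_pairs_const[where c = "v - 1"]) auto
  also have "\<dots> = (\<Sum>B\<in>\<B>. card (related_pairs ?all B))"
    using assms by (rule card_related_pairs_STS)
  also have "\<dots> = (\<Sum>B\<in>\<B>. 6)"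
  proof (rule sum.cong)
    fix B assume "B \<in> \<B>"
    then have "card B = 3" using assms unfolding is_STS_def by blast
    then show "card (related_pairs ?all B) = 6"
      by (subst card_related_pairs_const[where c = 2]) (auto intro: card_ge_0_finite)
  qed simp
  finally show ?thesis by simp
qed

lemma card_type3_blocks:
  assumes "is_STS (3 * n) \<B>"
  shows "card {B\<in>\<B>. num_classes B = 3} = n + 2 * card {B\<in>\<B>. num_classes B = 1}"
proof -
  let ?t = "\<lambda>i. card {B\<in>\<B>. num_classes B = i}"
  have fin: "finite \<B>" using assms by (rule finite_STS_blocks)
  have triple: "card B = 3" if "B \<in> \<B>" for B using assms that unfolding is_STS_def by blast
  have "card \<B> = (\<Sum>B\<in>\<B>. 1)" by simp
  also have "\<dots> = (\<Sum>B\<in>\<B>. of_bool (num_classes B = 1) + of_bool (num_classes B = 2) + of_bool (num_classes B = 3))"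
  proof (rule sum.cong)
    fix B assume "B \<in> \<B>"
    then have "num_classes B \<in> {1, 2, 3}"
      unfolding num_classes_def using card_image_triple triple by blast
    then show "(1::nat) = of_bool (num_classes B = 1) + of_bool (num_classes B = 2) + of_bool (num_classes B = 3)"
      by auto
  qed simp
  also have "\<dots> = ?t 1 + ?t 2 + ?t 3"
    using fin by (simp add: sum.distrib Int_def)
  finally have blocks: "6 * (?t 1 + ?t 2 + ?t 3) = 3 * n * (3 * n - 1)"
    using card_STS_blocks[OF assms] by simp
  have "3 * n * (n - 1) = card (related_pairs same_class {0..<3 * n})"
    by (rule card_same_class_pairs[symmetric])
  also have "\<dots> = (\<Sum>B\<in>\<B>. card (related_pairs same_class B))"
    using assms by (rule card_related_pairs_STS)
  also have "\<dots> = (\<Sum>B\<in>\<B>. 6 * of_bool (num_classes B = 1) + 2 * of_bool (num_classes B = 2))"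
    using card_kernel_pairs_triple[OF triple, of _ "\<lambda>x. x mod 3"]
    unfolding num_classes_def by (auto intro: sum.cong)
  also have "\<dots> = 6 * ?t 1 + 2 * ?t 2"
    using fin by (simp add: sum.distrib sum_distrib_left[symmetric] Int_def)
  finally have pairs: "3 * n * (n - 1) = 6 * ?t 1 + 2 * ?t 2" .
  have "3 * n * (3 * n - 1) = 3 * (3 * n * (n - 1)) + 6 * n" by (cases n) simp_all
  with blocks pairs have "6 * (?t 1 + ?t 2 + ?t 3) = 3 * (6 * ?t 1 + 2 * ?t 2) + 6 * n" by simp
  then show ?thesis by presburger
qed

definition translate :: "nat \<Rightarrow> nat \<Rightarrow> nat set \<Rightarrow> nat set" where
  "translate v k B = (\<lambda>i. (i + k) mod v) ` B"

lemma translate_translate: "translate v a (translate v b B) = translate v (b + a) B"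
  unfolding translate_def image_image by (simp add: mod_add_left_eq add.assoc)

lemma translate_mod: "translate v (k mod v) B = translate v k B"
  unfolding translate_def by (simp add: mod_add_right_eq)

lemma translate_0:
  assumes "B \<subseteq> {0..<v}" shows "translate v 0 B = B"
proof -
  have "translate v 0 B = id ` B"
    unfolding translate_def using assms by (intro image_cong) auto
  then show ?thesis by simp
qed

lemma translate_add_self: "translate v (k + v) B = translate v k B"
  by (metis translate_mod mod_add_self2)

lemma funpow_shift_block:
  assumes "B \<subseteq> {0..<v}" shows "(shift_block v ^^ k) B = translate v k B"
proof (induction k)
  case 0 show ?case using translate_0[OF assms] by simp
next
  case (Suc k)
  have "shift_block v C = translate v 1 C" for C unfolding shift_block_def translate_def ..
  with Suc show ?case by (simp add: translate_translate)
qed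

lemma block_orbit_eq:
  assumes "0 < v" "B \<subseteq> {0..<v}"
  shows "block_orbit v B = (\<lambda>k. translate v k B) ` {..<v}"
proof -
  have "translate v k B \<in> (\<lambda>k. translate v k B) ` {..<v}" for k
    using assms(1) translate_mod[of v k B] by (metis imageI lessThan_iff mod_less_divisor)
  then show ?thesis unfolding block_orbit_def funpow_shift_block[OF assms(2)] by auto
qed

lemma num_classes_translate:
  assumes "3 dvd v" shows "num_classes (translate v k B) = num_classes B"
proof -
  have "(\<lambda>x. x mod 3) ` translate v k B = (\<lambda>c. (c + k) mod 3) ` (\<lambda>x. x mod 3) ` B"
    unfolding translate_def image_image by (simp add: mod_mod_cancel[OF assms] mod_add_left_eq)
  moreover have "inj_on (\<lambda>c. (c + k) mod 3) ((\<lambda>x. x mod 3) ` B)"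
  proof (rule inj_onI)
    fix x y assume "x \<in> (\<lambda>x. x mod 3) ` B" "y \<in> (\<lambda>x. x mod 3) ` B"
      and "(x + k) mod 3 = (y + k) mod 3"
    moreover have "x \<in> {0, 1, 2}" "y \<in> {0, 1, 2}" "k mod 3 \<in> {0, 1, 2}"
      using calculation(1,2) by auto
    ultimately show "x = y" by (auto simp: mod_add_right_eq[of _ k, symmetric])
  qed
  ultimately show ?thesis unfolding num_classes_def by (simp add: card_image)
qed

lemma not_full_orbit_imp_stabilizer:
  assumes "0 < v" "B \<subseteq> {0..<v}" "\<not> full_orbit v B"
  obtains d where "0 < d" "d < v" "translate v d B = B"
proof -
  have "\<not> inj_on (\<lambda>k. translate v k B) {..<v}"
    using assms card_image unfolding full_orbit_def block_orbit_eq[OF assms(1,2)] by fastforce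
  then obtain j k where jk: "j < k" "k < v" "translate v j B = translate v k B"
    unfolding inj_on_def by (metis lessThan_iff linorder_neqE_nat)
  have "B = translate v (0 + v) B"
    using translate_add_self[of v 0 B] translate_0[OF assms(2)] by simp
  also have "\<dots> = translate v (v - j) (translate v k B)"
    using jk by (simp flip: jk(3) add: translate_translate)
  also have "\<dots> = translate v ((k - j) + v) B"
    using jk by (simp add: translate_translate)
  also have "\<dots> = translate v (k - j) B"
    by (rule translate_add_self)
  finally show thesis using jk by (intro that[of "k - j"]) auto
qed

lemma translate_stable_closed:
  assumes "translate v d B = B" "B \<subseteq> {0..<v}" "x \<in> B"
  shows "(x + m * d) mod v \<in> B"
proof (induction m)
  case 0 show ?case using assms(2,3) by auto
next
  case (Suc m)
  then have "((x + m * d) mod v + d) mod v \<in> B" using assms(1) unfolding translate_def by blast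
  moreover have "x + Suc m * d = (x + m * d) + d" by simp
  ultimately show ?case by (simp only: mod_add_left_eq)
qed

lemma translate_stable_triple_dvd:
  assumes "odd v" "B \<subseteq> {0..<v}" "card B = 3" "translate v d B = B" "x \<in> B"
  shows "v dvd 3 * d"
proof -
  \<comment> \<open>Two of x, x + d, x + 2d, x + 3d coincide mod v, so v divides d, 2d or 3d; v is odd.\<close>
  let ?g = "\<lambda>m. (x + m * d) mod v"
  have "?g ` {..<4} \<subseteq> B" using translate_stable_closed[OF assms(4,2,5)] by blast
  moreover have "finite B" using assms(3) by (auto intro: card_ge_0_finite)
  ultimately have "card (?g ` {..<4}) < card {..<4::nat}"
    using card_mono[of B "?g ` {..<4}"] assms(3) by simp
  then have "\<not> inj_on ?g {..<4}" using card_image by fastforce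
  then obtain i j where ij: "i < j" "j < 4" "?g i = ?g j"
    unfolding inj_on_def by (metis lessThan_iff linorder_neqE_nat)
  moreover have "x + i * d \<le> x + j * d" using ij by simp
  ultimately have "v dvd (x + j * d) - (x + i * d)"
    using mod_eq_dvd_iff_nat[of "x + i * d" "x + j * d" v] by simp
  then have "v dvd (j - i) * d" by (simp add: diff_mult_distrib)
  moreover have "j - i \<in> {1, 2, 3}" using ij by auto
  moreover have "v dvd 2 * d \<Longrightarrow> v dvd d"
    using assms(1) by (simp add: coprime_dvd_mult_right_iff)
  ultimately show ?thesis by auto
qed

lemma coset_triple:
  fixes n x :: nat
  assumes "x < 3 * n"
  shows "{x, (x + n) mod (3 * n), (x + 2 * n) mod (3 * n)} = {x mod n, x mod n + n, x mod n + 2 * n}"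
proof -
  define r where "r = x mod n"
  have r: "r < n" using assms unfolding r_def by simp
  have "x div n < 3" using assms by (simp add: div_less_iff_less_mult)
  then have "x div n \<in> {0, 1, 2}" by auto
  moreover have "x = x div n * n + r" unfolding r_def by simp
  ultimately consider "x = r" | "x = r + n" | "x = r + 2 * n" by auto
  then show ?thesis
  proof cases
    case 1
    then show ?thesis using r unfolding r_def[symmetric] by simp
  next
    case 2
    moreover have "(r + 3 * n) mod (3 * n) = r" using r by simp
    ultimately show ?thesis using r unfolding r_def[symmetric] by (auto simp: add.assoc)
  next
    case 3
    moreover have "(r + 3 * n) mod (3 * n) = r" using r by simp
    moreover have "(r + n + 3 * n) mod (3 * n) = r + n" using r by (simp only: mod_add_self2) simp
    ultimately show ?thesis using r unfolding r_def[symmetric] by (auto simp: algebra_simps)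
  qed
qed

lemma translate_stable_triple:
  assumes "odd v" "v = 3 * n" "B \<subseteq> {0..<v}" "card B = 3"
    and "0 < d" "d < v" "translate v d B = B"
  obtains r where "r < n" "B = {r, r + n, r + 2 * n}"
proof -
  have "finite B" using assms(4) by (auto intro: card_ge_0_finite)
  obtain x where x: "x \<in> B" using assms(4) by fastforce
  have "v dvd 3 * d" using translate_stable_triple_dvd[OF assms(1,3,4,7) x] .
  then obtain q where q: "d = n * q" using assms(2) by auto
  then have "q = 1 \<or> q = 2" using assms(2,5,6) by auto
  moreover have "(x + 1 * d) mod v \<in> B" "(x + 2 * d) mod v \<in> B"
    using translate_stable_closed[OF assms(7,3) x] by blast+
  moreover have "(x + 2 * d) mod v = (x + n) mod v" if "q = 2"
  proof -
    have "x + 2 * d = (x + n) + v" using q that assms(2) by simp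
    then show ?thesis by (simp only: mod_add_self2)
  qed
  ultimately have "(x + n) mod v \<in> B \<and> (x + 2 * n) mod v \<in> B"
    using q by (auto simp: mult.commute)
  then have "{x, (x + n) mod v, (x + 2 * n) mod v} \<subseteq> B" using x by auto
  moreover have "x < 3 * n" using x assms(2,3) by auto
  ultimately have "{x mod n, x mod n + n, x mod n + 2 * n} \<subseteq> B"
    using coset_triple assms(2) by metis
  moreover have "0 < n" using assms(2,5,6) by simp
  ultimately have "{x mod n, x mod n + n, x mod n + 2 * n} = B"
    using card_subset_eq[OF \<open>finite B\<close>] assms(4) by simp
  then show thesis using \<open>0 < n\<close> by (intro that[of "x mod n"]) auto
qed

lemma card_type3_blocks_le:
  assumes "is_cyclic_STS v \<B>" "odd v" "v = 3 * n"
    and "\<not> (\<exists>B\<in>\<B>. full_orbit v B \<and> orbit_of_type v 3 B)"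
  shows "card {B\<in>\<B>. num_classes B = 3} \<le> n"
proof -
  have "0 < v" using assms(2) by (intro odd_pos)
  have "{B\<in>\<B>. num_classes B = 3} \<subseteq> (\<lambda>r. {r, r + n, r + 2 * n}) ` {..<n}"
  proof
    fix B assume "B \<in> {B\<in>\<B>. num_classes B = 3}"
    then have B: "B \<in> \<B>" "num_classes B = 3" "B \<subseteq> {0..<v}" "card B = 3"
      using assms(1) unfolding is_cyclic_STS_def is_STS_def by auto
    have "orbit_of_type v 3 B"
      unfolding orbit_of_type_def block_orbit_eq[OF \<open>0 < v\<close> B(3)]
      using num_classes_translate[of v] B(2) assms(3) by auto
    then have "\<not> full_orbit v B" using assms(4) B(1) by blast
    then obtain d where "0 < d" "d < v" "translate v d B = B"
      using not_full_orbit_imp_stabilizer[OF \<open>0 < v\<close> B(3)] by blast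
    then obtain r where "r < n" "B = {r, r + n, r + 2 * n}"
      using translate_stable_triple[OF assms(2,3) B(3,4)] by blast
    then show "B \<in> (\<lambda>r. {r, r + n, r + 2 * n}) ` {..<n}" by blast
  qed
  then show ?thesis using card_mono card_image_le
    by (metis (no_types, lifting) card_lessThan finite_imageI finite_lessThan le_trans)
qed

theorem mainTheorem4:
  fixes v :: nat and \<B> :: "nat set set"
  assumes "v mod 18 = 3 \<or> v mod 18 = 15"
    and "is_cyclic_STS v \<B>"
    and "\<not> (\<exists>B\<in>\<B>. full_orbit v B \<and> orbit_of_type v 3 B)"
  shows "\<not> (\<exists>B\<in>\<B>. full_orbit v B \<and> orbit_of_type v 1 B)"
proof -
  have "3 dvd v" "odd v" using assms(1) by presburger+
  then obtain n where n: "v = 3 * n" by blast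
  have sts: "is_STS v \<B>" using assms(2) unfolding is_cyclic_STS_def by simp
  have "card {B\<in>\<B>. num_classes B = 3} \<le> n"
    using card_type3_blocks_le[OF assms(2) \<open>odd v\<close> n assms(3)] .
  moreover have "card {B\<in>\<B>. num_classes B = 3} = n + 2 * card {B\<in>\<B>. num_classes B = 1}"
    using card_type3_blocks sts unfolding n by blast
  ultimately have "card {B\<in>\<B>. num_classes B = 1} = 0" by linarith
  then have "num_classes B \<noteq> 1" if "B \<in> \<B>" for B
    using that finite_STS_blocks[OF sts] by auto
  moreover have "B \<in> block_orbit v B" for B
    unfolding block_orbit_def by (intro CollectI exI[of _ 0]) simp
  ultimately show ?thesis unfolding orbit_of_type_def by blast
qed

end
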